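(* Let $A_1,A_2$ be two stochastic undirected $n\times n$ matrices. Then the switched system $x(t+1)=A_{\sigma(t)}x(t)$, $x(0)=x_0$, converges to a multiple of $\mathbf{1}$ for every $x_0\in\mathbb{R}^n$ and every sequence $\sigma:\mathbb{N}\to\{1,2\}$ if and only if it converges to a multiple of $\mathbf{1}$ for every $x_0\in\mathbb{R}^n$ under each of the three sequences $\sigma_1=1,1,1,\dots$, $\sigma_2=2,2,2,\dots$ and $\sigma_3=1,2,1,2,\dots$.
   Context: $\mathbf{1}=(1,\dots,1)^\top$. A stochastic matrix is a nonnegative matrix whose rows sum to $1$. A nonnegative matrix $A=(a_{ij})$ is undirected if $a_{ij}>0 \Leftrightarrow a_{ji}>0$ for all $i,j$. *)

theory Defs
  imports "HOL-Analysis.Analysis"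
begin

definition stochastic :: "real^'n^'n \<Rightarrow> bool" where
  "stochastic A \<longleftrightarrow> (\<forall>i j. A $ i $ j \<ge> 0) \<and> (\<forall>i. (\<Sum>j\<in>UNIV. A $ i $ j) = 1)"

definition undirected :: "real^'n^'n \<Rightarrow> bool" where
  "undirected A \<longleftrightarrow> (\<forall>i j. A $ i $ j > 0 \<longleftrightarrow> A $ j $ i > 0)"

fun traj :: "(nat \<Rightarrow> real^'n^'n) \<Rightarrow> (nat \<Rightarrow> nat) \<Rightarrow> real^'n \<Rightarrow> nat \<Rightarrow> real^'n" where
  "traj A \<sigma> x0 0 = x0"
| "traj A \<sigma> x0 (Suc t) = A (\<sigma> t) *v traj A \<sigma> x0 t"

definition consensus_under :: "(nat \<Rightarrow> real^'n^'n) \<Rightarrow> (nat \<Rightarrow> nat) \<Rightarrow> bool" where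
  "consensus_under A \<sigma> \<longleftrightarrow>
     (\<forall>x0. \<exists>c::real. traj A \<sigma> x0 \<longlonglongrightarrow> c *\<^sub>R (1 :: real^'n))"

end

theory Submission
  imports Defs
begin

text \<open>Only the positivity patterns of the matrices matter; view the pattern of A_b as a relation
  R_b, which is symmetric and left-total. A product of stochastic matrices whose pattern has a full
  column (some j reachable from every i) contracts max x - min x by a fixed factor, and conversely
  consensus under a signal forces some product of it to have such a column. So the three test
  signals give full columns in powers of R_1, R_2 and R_2 R_1, and it remains to get a full column
  in every product over a window of fixed length N of an arbitrary signal.

  Every nonempty word w in R_1, R_2 has a power with a full column: since R_a R_a contains the
  identity, deleting a square a a from w only shrinks its relation, and a square-free word
  alternates; an alternating word of even length is a power of R_a R_b, one of odd length is a
  palindrome whose square contains R_a R_a. For a window of length N = 2^(n^2), two of its N + 1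
  prefix products coincide, Q = P Q, hence Q = P^m Q, and a full column of P^m passes to Q and to
  the whole window.\<close>

section \<open>Relations with a full column\<close>

definition has_full_column :: "('a \<Rightarrow> 'b \<Rightarrow> bool) \<Rightarrow> bool" where
  "has_full_column X \<longleftrightarrow> (\<exists>j. \<forall>i. X i j)"

lemma has_full_column_OO_left:
  "left_total R \<Longrightarrow> has_full_column X \<Longrightarrow> has_full_column (R OO X)"
  unfolding has_full_column_def left_total_def by blast

lemma has_full_column_OO_right:
  "has_full_column X \<Longrightarrow> left_total R \<Longrightarrow> has_full_column (X OO R)"
  unfolding has_full_column_def left_total_def by blast

lemma has_full_column_mono: "X \<le> Y \<Longrightarrow> has_full_column X \<Longrightarrow> has_full_column Y"
  unfolding has_full_column_def by blast

lemma relpowp_le_relpowp: "R \<le> S \<Longrightarrow> R ^^ n \<le> S ^^ n"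
  for R :: "'a \<Rightarrow> 'a \<Rightarrow> bool"
  by (induction n) (auto simp: relcompp_mono)

lemma relpowp_mult: "(R ^^ k) ^^ m = R ^^ (k * m)"
  for R :: "'a \<Rightarrow> 'a \<Rightarrow> bool"
  by (induction m) (simp_all add: relpowp_add[symmetric] add.commute)

lemma relpowp_fixed_left: "X OO Q = Q \<Longrightarrow> X ^^ m OO Q = Q"
  by (induction m) (simp_all add: eq_OO relcompp_assoc)

lemma relpowp_two: "R ^^ 2 = R OO R"
  for R :: "'a \<Rightarrow> 'a \<Rightarrow> bool"
  by (simp add: numeral_2_eq_2 eq_OO)

lemma OO_le_OO_middle: "(=) \<le> X \<Longrightarrow> R OO S \<le> R OO X OO S"
  by blast

lemma eq_le_OO_self: "symp R \<Longrightarrow> left_total R \<Longrightarrow> (=) \<le> R OO R"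
  unfolding symp_def left_total_def by blast

lemma has_full_column_relpowp_mono:
  fixes R :: "'a \<Rightarrow> 'a \<Rightarrow> bool"
  assumes "left_total R" "has_full_column (R ^^ t)" "t \<le> t'"
  shows "has_full_column (R ^^ t')"
  using assms(3)
proof (induction t')
  case (Suc t')
  then show ?case
    using assms(2) has_full_column_OO_left[OF assms(1)]
    by (auto simp: le_Suc_eq relpowp_Suc_left simp del: relpowp.simps)
qed (use assms(2) in simp)

lemma relpowp_OO_rotate: "(X OO Y) ^^ Suc t = X OO (Y OO X) ^^ t OO Y"
  for X :: "'a \<Rightarrow> 'b \<Rightarrow> bool" and Y :: "'b \<Rightarrow> 'a \<Rightarrow> bool"
proof (induction t)
  case (Suc t)
  have "(X OO Y) ^^ Suc (Suc t) = (X OO Y) OO X OO (Y OO X) ^^ t OO Y"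
    using Suc by (simp only: relpowp_Suc_left)
  also have "\<dots> = X OO (Y OO X) ^^ Suc t OO Y"
    by (simp only: relpowp_Suc_left relcompp_assoc)
  finally show ?case .
qed (simp add: OO_eq eq_OO)

lemma has_full_column_relpowp_rotate:
  fixes X :: "'a \<Rightarrow> 'b \<Rightarrow> bool" and Y :: "'b \<Rightarrow> 'a \<Rightarrow> bool"
  assumes "left_total X" "left_total Y" "has_full_column ((X OO Y) ^^ t)"
  shows "has_full_column ((Y OO X) ^^ Suc t)"
  unfolding relpowp_OO_rotate[where X=Y and Y=X]
  using assms by (intro has_full_column_OO_left has_full_column_OO_right)

text \<open>rel_prod S s t is S (s + t - 1) OO ... OO S s, matching the matrix product
  A (s + t - 1) ** ... ** A s that drives the system from time s to time s + t.\<close>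
fun rel_prod :: "(nat \<Rightarrow> 'a \<Rightarrow> 'a \<Rightarrow> bool) \<Rightarrow> nat \<Rightarrow> nat \<Rightarrow> 'a \<Rightarrow> 'a \<Rightarrow> bool" where
  "rel_prod S s 0 = (=)"
| "rel_prod S s (Suc t) = S (s + t) OO rel_prod S s t"

lemma rel_prod_add: "rel_prod S s (i + d) = rel_prod S (s + i) d OO rel_prod S s i"
  by (induction d) (simp_all add: eq_OO relcompp_assoc add.assoc)

lemma left_total_rel_prod: "(\<And>t. left_total (S t)) \<Longrightarrow> left_total (rel_prod S s t)"
  by (induction t) (simp_all add: left_total_eq left_total_OO)

lemma rel_prod_const: "rel_prod (\<lambda>_. X) s t = X ^^ t"
  by (induction t) (simp_all add: relpowp_commute)

lemma rel_prod_alternating: "rel_prod (\<lambda>t. X (even t)) 0 (2 * k) = (X False OO X True) ^^ k"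
  by (induction k) (simp_all add: relpowp_Suc_left relcompp_assoc del: relpowp_Suc_right)

lemma has_full_column_rel_prod_mono:
  assumes "\<And>t. left_total (S t)" "has_full_column (rel_prod S s t)" "t \<le> t'"
  shows "has_full_column (rel_prod S s t')"
  using assms(3)
proof (induction t')
  case (Suc t')
  then show ?case using assms(2) has_full_column_OO_left[OF assms(1)] by (auto simp: le_Suc_eq)
qed (use assms(2) in simp)

lemma has_full_column_relpowp_power:
  fixes X :: "'a \<Rightarrow> 'a \<Rightarrow> bool"
  assumes "left_total X" "has_full_column (X ^^ t)" "0 < k"
  shows "has_full_column ((X ^^ k) ^^ t)"
proof -
  have "t \<le> k * t" using assms(3) by simp
  then show ?thesis
    unfolding relpowp_mult by (rule has_full_column_relpowp_mono[OF assms(1,2)])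
qed

lemma has_full_column_rel_prod_card:
  fixes S :: "nat \<Rightarrow> 'a::finite \<Rightarrow> 'a \<Rightarrow> bool"
  assumes total: "\<And>t. left_total (S t)"
    and power: "\<And>s d. 0 < d \<Longrightarrow> \<exists>m. has_full_column (rel_prod S s d ^^ m)"
  shows "has_full_column (rel_prod S s CARD('a \<Rightarrow> 'a \<Rightarrow> bool))"
proof -
  define N where "N = CARD('a \<Rightarrow> 'a \<Rightarrow> bool)"
  have "\<not> inj_on (rel_prod S s) {0..N}"
  proof
    assume "inj_on (rel_prod S s) {0..N}"
    then have "card {0..N} \<le> card (UNIV :: ('a \<Rightarrow> 'a \<Rightarrow> bool) set)"
      by (rule card_inj_on_le) simp_all
    then show False unfolding N_def by simp
  qed
  then obtain i j where "i \<le> N" "j \<le> N" "i \<noteq> j" "rel_prod S s i = rel_prod S s j"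
    unfolding inj_on_def by fastforce
  then obtain i j where ij: "i < j" "j \<le> N" "rel_prod S s i = rel_prod S s j"
    by (cases i j rule: linorder_cases) auto
  define P where "P = rel_prod S (s + i) (j - i)"
  obtain m where m: "has_full_column (P ^^ m)"
    using power[of "j - i" "s + i"] ij unfolding P_def by auto
  have "P OO rel_prod S s i = rel_prod S s j"
    using ij(1) rel_prod_add[of S s i "j - i"] unfolding P_def by simp
  then have "P OO rel_prod S s i = rel_prod S s i"
    using ij(3) by simp
  then have "P ^^ m OO rel_prod S s i = rel_prod S s i"
    by (rule relpowp_fixed_left)
  then have "has_full_column (rel_prod S s i)"
    using has_full_column_OO_right[OF m left_total_rel_prod[of S s i, OF total]] by simp
  moreover have "rel_prod S s N = rel_prod S (s + i) (N - i) OO rel_prod S s i"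
    using ij rel_prod_add[of S s i "N - i"] by simp
  ultimately have "has_full_column (rel_prod S s N)"
    using has_full_column_OO_left[OF left_total_rel_prod[of S "s + i" "N - i", OF total]] by simp
  then show ?thesis unfolding N_def .
qed

section \<open>Words in two symmetric left-total relations\<close>

fun alternating :: "bool \<Rightarrow> nat \<Rightarrow> bool list" where
  "alternating a 0 = []"
| "alternating a (Suc n) = a # alternating (\<not> a) n"

lemma alternating_Suc_snoc:
  "alternating a (Suc n) = alternating a n @ [if even n then a else \<not> a]"
proof (induction n arbitrary: a)
  case (Suc n)
  have "alternating a (Suc (Suc n)) = a # alternating (\<not> a) (Suc n)"
    by (simp only: alternating.simps)
  also have "\<dots> = a # (alternating (\<not> a) n @ [if even n then \<not> a else \<not> \<not> a])"
    using Suc by (simp only:)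
  also have "\<dots> = alternating a (Suc n) @ [if even (Suc n) then a else \<not> a]"
    by simp
  finally show ?case .
qed simp

lemma rev_alternating: "rev (alternating a n) = alternating (if even n then \<not> a else a) n"
proof (induction n arbitrary: a)
  case (Suc n)
  have "rev (alternating a (Suc n)) = alternating (if even n then a else \<not> a) n @ [a]"
    using Suc[of "\<not> a"] by simp
  also have "\<dots> = alternating (if even n then a else \<not> a) (Suc n)"
    by (simp only: alternating_Suc_snoc) auto
  finally show ?case by simp
qed simp

lemma alternating_if_no_square:
  assumes "\<nexists>x a y. w = x @ a # a # y" "w \<noteq> []"
  shows "w = alternating (hd w) (length w)"
  using assms
proof (induction w)
  case (Cons b w)
  show ?case
  proof (cases w)
    case (Cons c u)
    have "c \<noteq> b"
    proof
      assume "c = b"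
      then have "b # w = [] @ b # b # u" using \<open>w = c # u\<close> by simp
      then show False using Cons.prems(1) by blast
    qed
    moreover have "\<nexists>x a y. w = x @ a # a # y"
    proof
      assume "\<exists>x a y. w = x @ a # a # y"
      then obtain x a y where "b # w = (b # x) @ a # a # y" by auto
      then show False using Cons.prems(1) by blast
    qed
    ultimately show ?thesis using Cons.IH \<open>w = c # u\<close> by (cases b; cases c) auto
  qed simp
qed simp

locale symmetric_total_pair =
  fixes R :: "bool \<Rightarrow> 'a \<Rightarrow> 'a \<Rightarrow> bool"
  assumes symp: "symp (R b)" and left_total: "left_total (R b)"
begin

definition word_rel :: "bool list \<Rightarrow> 'a \<Rightarrow> 'a \<Rightarrow> bool" where
  "word_rel w = foldr (\<lambda>b X. R b OO X) w (=)"

lemma word_rel_Nil [simp]: "word_rel [] = (=)"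
  by (simp add: word_rel_def)

lemma word_rel_Cons [simp]: "word_rel (b # w) = R b OO word_rel w"
  by (simp add: word_rel_def)

lemma word_rel_append: "word_rel (x @ y) = word_rel x OO word_rel y"
  by (induction x) (simp_all add: eq_OO relcompp_assoc)

lemma eq_le_word_rel_rev: "(=) \<le> word_rel w OO word_rel (rev w)"
proof (induction w)
  case (Cons a w)
  show ?case
  proof (rule predicate2I)
    fix x y :: 'a
    assume "x = y"
    obtain z where "R a x z" using left_total by (blast elim: left_totalE)
    moreover have "R a z y" using symp \<open>R a x z\<close> \<open>x = y\<close> by (blast dest: sympD)
    moreover obtain u where "word_rel w z u" "word_rel (rev w) u z"
      using Cons.IH[THEN predicate2D, OF refl] by blast
    ultimately show "(word_rel (a # w) OO word_rel (rev (a # w))) x y"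
      by (auto simp: word_rel_append)
  qed
qed (simp add: eq_OO)

lemma word_rel_le_insert_square: "word_rel (x @ y) \<le> word_rel (x @ a # a # y)"
  using OO_le_OO_middle[OF eq_le_OO_self[OF symp left_total], of "word_rel x" "word_rel y"]
  by (simp add: word_rel_append relcompp_assoc)

lemma word_rel_alternating_even: "word_rel (alternating a (2 * k)) = (R a OO R (\<not> a)) ^^ k"
  by (induction k) (simp_all add: relpowp_Suc_left relcompp_assoc del: relpowp_Suc_right)

lemma square_le_word_rel_alternating_odd:
  assumes "odd n"
  shows "R a OO R a \<le> word_rel (alternating a n) OO word_rel (alternating a n)"
proof -
  obtain k where n: "n = Suc k" and "even k" using assms by (cases n) auto
  define u where "u = alternating (\<not> a) k"
  have "rev (alternating a n) = alternating a n"
    using rev_alternating[of a n] assms by simp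
  then have "word_rel (alternating a n) OO word_rel (alternating a n)
      = word_rel (alternating a n) OO word_rel (rev (alternating a n))"
    by simp
  also have "\<dots> = R a OO (word_rel u OO word_rel (rev u)) OO R a"
    by (simp add: n u_def word_rel_append relcompp_assoc OO_eq)
  finally show ?thesis
    using OO_le_OO_middle[OF eq_le_word_rel_rev[of u], of "R a" "R a"] by simp
qed

lemma has_full_column_word_rel_alternating_power:
  assumes single: "\<And>b. \<exists>t. has_full_column (R b ^^ t)"
    and pair: "\<And>b. \<exists>t. has_full_column ((R b OO R (\<not> b)) ^^ t)"
    and "0 < n"
  shows "\<exists>m. has_full_column (word_rel (alternating a n) ^^ m)"
proof (cases "even n")
  case True
  then obtain k where n: "n = 2 * k" and "0 < k" using \<open>0 < n\<close> by auto
  obtain t where "has_full_column ((R a OO R (\<not> a)) ^^ t)" using pair by blast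
  then have "has_full_column (((R a OO R (\<not> a)) ^^ k) ^^ t)"
    using has_full_column_relpowp_power[OF left_total_OO[OF left_total left_total]] \<open>0 < k\<close>
    by blast
  then show ?thesis unfolding n word_rel_alternating_even by blast
next
  case False
  define W where "W = word_rel (alternating a n)"
  obtain t where "has_full_column (R a ^^ t)" using single by blast
  then have "has_full_column ((R a ^^ 2) ^^ t)"
    using has_full_column_relpowp_power[OF left_total] by simp
  moreover have "(R a ^^ 2) ^^ t \<le> (W ^^ 2) ^^ t"
    using square_le_word_rel_alternating_odd[OF False, of a]
    unfolding W_def relpowp_two by (rule relpowp_le_relpowp)
  ultimately have "has_full_column ((W ^^ 2) ^^ t)" by (rule has_full_column_mono[rotated])
  then show ?thesis unfolding W_def relpowp_mult by blast
qed

lemma has_full_column_word_rel_power: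
  assumes single: "\<And>b. \<exists>t. has_full_column (R b ^^ t)"
    and pair: "\<And>b. \<exists>t. has_full_column ((R b OO R (\<not> b)) ^^ t)"
  shows "w \<noteq> [] \<Longrightarrow> \<exists>m. has_full_column (word_rel w ^^ m)"
proof (induction "length w" arbitrary: w rule: less_induct)
  case less
  show ?case
  proof (cases "\<exists>x a y. w = x @ a # a # y")
    case True
    then obtain x a y where w: "w = x @ a # a # y" by blast
    show ?thesis
    proof (cases "x @ y = []")
      case True
      obtain t where "has_full_column (R a ^^ t)" using single by blast
      then have "has_full_column ((R a ^^ 2) ^^ t)"
        using has_full_column_relpowp_power[OF left_total] by simp
      moreover have "word_rel w = R a ^^ 2"
        using w True by (simp add: relpowp_two OO_eq)
      ultimately show ?thesis by auto
    next
      case False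
      then obtain m where "has_full_column (word_rel (x @ y) ^^ m)"
        using less.hyps[of "x @ y"] w by auto
      then have "has_full_column (word_rel w ^^ m)"
        unfolding w
        by (rule has_full_column_mono[OF relpowp_le_relpowp[OF word_rel_le_insert_square]])
      then show ?thesis by blast
    qed
  next
    case False
    then have "w = alternating (hd w) (length w)"
      using alternating_if_no_square less.prems by blast
    moreover have "0 < length w"
      using less.prems by simp
    ultimately show ?thesis
      using has_full_column_word_rel_alternating_power[OF single pair] by metis
  qed
qed

lemma rel_prod_eq_word_rel: "rel_prod (\<lambda>t. R (b t)) s d = word_rel (map b (rev [s..<s + d]))"
  by (induction d) simp_all

lemma has_full_column_pair_power_swap:
  assumes "\<exists>t. has_full_column ((R False OO R True) ^^ t)"
  shows "\<exists>t. has_full_column ((R c OO R (\<not> c)) ^^ t)"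
proof (cases c)
  case True
  obtain t where "has_full_column ((R False OO R True) ^^ t)" using assms by blast
  then have "has_full_column ((R True OO R False) ^^ Suc t)"
    by (rule has_full_column_relpowp_rotate[OF left_total left_total])
  then show ?thesis using True by (auto simp del: relpowp_Suc_right)
qed (use assms in simp)

end

lemma has_full_column_rel_prod_window:
  fixes R :: "bool \<Rightarrow> 'a::finite \<Rightarrow> 'a \<Rightarrow> bool"
  assumes "symmetric_total_pair R"
    and single: "\<And>b. \<exists>t. has_full_column (R b ^^ t)"
    and pair: "\<exists>t. has_full_column ((R False OO R True) ^^ t)"
  shows "has_full_column (rel_prod (\<lambda>t. R (b t)) s CARD('a \<Rightarrow> 'a \<Rightarrow> bool))"
proof -
  interpret symmetric_total_pair R by fact
  show ?thesis
  proof (rule has_full_column_rel_prod_card)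
    fix s d :: nat
    assume "0 < d"
    then show "\<exists>m. has_full_column (rel_prod (\<lambda>t. R (b t)) s d ^^ m)"
      unfolding rel_prod_eq_word_rel
      using has_full_column_word_rel_power[OF single has_full_column_pair_power_swap[OF pair]]
      by simp
  qed (rule left_total)
qed

section \<open>Positivity patterns of stochastic matrices\<close>

definition pos_rel :: "real^'n^'m \<Rightarrow> 'm \<Rightarrow> 'n \<Rightarrow> bool" where
  "pos_rel M i j \<longleftrightarrow> 0 < M $ i $ j"

lemma left_total_pos_rel:
  assumes "stochastic M"
  shows "left_total (pos_rel M)"
proof (rule left_totalI)
  fix i
  have "\<not> (\<forall>j. M $ i $ j \<le> 0)"
  proof
    assume "\<forall>j. M $ i $ j \<le> 0"
    then have "(\<Sum>j\<in>UNIV. M $ i $ j) \<le> 0" by (simp add: sum_nonpos)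
    with assms show False by (simp add: stochastic_def)
  qed
  then show "\<exists>j. pos_rel M i j" by (auto simp: pos_rel_def not_le)
qed

lemma symp_pos_rel: "undirected M \<Longrightarrow> symp (pos_rel M)"
  unfolding undirected_def symp_def pos_rel_def by blast

lemma stochastic_mat_1: "stochastic (mat 1 :: real^'n^'n)"
  unfolding stochastic_def by (simp add: mat_def)

lemma stochastic_mult:
  fixes A B :: "real^'n^'n"
  assumes "stochastic A" "stochastic B"
  shows "stochastic (A ** B)"
proof -
  have "(\<Sum>j\<in>UNIV. (A ** B) $ i $ j) = (\<Sum>k\<in>UNIV. A $ i $ k * (\<Sum>j\<in>UNIV. B $ k $ j))" for i
    unfolding matrix_matrix_mult_def by (simp add: sum_distrib_left) (rule sum.swap)
  then show ?thesis
    using assms unfolding stochastic_def by (simp add: matrix_matrix_mult_def sum_nonneg)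
qed

lemma pos_rel_mult:
  fixes A :: "real^'n^'m" and B :: "real^'p^'n"
  assumes "\<And>i j. 0 \<le> A $ i $ j" "\<And>i j. 0 \<le> B $ i $ j"
  shows "pos_rel (A ** B) = pos_rel A OO pos_rel B"
proof (intro ext)
  fix i j
  have "0 \<le> A $ i $ k * B $ k $ j" for k
    using assms by simp
  then have "(0 < (\<Sum>k\<in>UNIV. A $ i $ k * B $ k $ j)) \<longleftrightarrow> (\<exists>k. 0 < A $ i $ k * B $ k $ j)"
    by (metis (no_types, lifting) finite UNIV_I less_eq_real_def sum_nonneg_eq_0_iff sum_pos2)
  also have "\<dots> \<longleftrightarrow> (\<exists>k. 0 < A $ i $ k \<and> 0 < B $ k $ j)"
    using assms by (meson less_le_not_le zero_less_mult_iff)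
  finally show "pos_rel (A ** B) i j = (pos_rel A OO pos_rel B) i j"
    unfolding pos_rel_def matrix_matrix_mult_def by auto
qed

fun mat_prod :: "(nat \<Rightarrow> real^'n^'n) \<Rightarrow> nat \<Rightarrow> nat \<Rightarrow> real^'n^'n" where
  "mat_prod B s 0 = mat 1"
| "mat_prod B s (Suc t) = B (s + t) ** mat_prod B s t"

lemma stochastic_mat_prod: "(\<And>t. stochastic (B t)) \<Longrightarrow> stochastic (mat_prod B s t)"
  by (induction t) (simp_all add: stochastic_mat_1 stochastic_mult)

lemma pos_rel_mat_prod:
  assumes "\<And>t. stochastic (B t)"
  shows "pos_rel (mat_prod B s t) = rel_prod (\<lambda>t. pos_rel (B t)) s t"
proof (induction t)
  case 0
  show ?case by (auto simp: pos_rel_def mat_def)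
next
  case (Suc t)
  then show ?case
    using assms stochastic_mat_prod[of B s t, OF assms] by (simp add: pos_rel_mult stochastic_def)
qed

lemma mat_prod_entry_ge_power:
  assumes "\<And>t. stochastic (B t)" "\<And>t i j. 0 < B t $ i $ j \<Longrightarrow> a \<le> B t $ i $ j" "0 \<le> a"
  shows "0 < mat_prod B s t $ i $ j \<Longrightarrow> a ^ t \<le> mat_prod B s t $ i $ j"
proof (induction t arbitrary: i)
  case 0
  then show ?case by (simp add: mat_def split: if_splits)
next
  case (Suc t)
  have nonneg: "0 \<le> B u $ i $ j" "0 \<le> mat_prod B s u $ i $ j" for u i j
    using assms(1) stochastic_mat_prod[OF assms(1)] unfolding stochastic_def by auto
  have "pos_rel (B (s + t) ** mat_prod B s t) i j"
    using Suc.prems by (simp add: pos_rel_def)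
  then obtain k where k: "0 < B (s + t) $ i $ k" "0 < mat_prod B s t $ k $ j"
    unfolding pos_rel_mult[OF nonneg(1)[of "s + t"] nonneg(2)] pos_rel_def by blast
  have "a ^ Suc t \<le> B (s + t) $ i $ k * mat_prod B s t $ k $ j"
    using assms(2,3) k Suc.IH[OF k(2)] by (simp add: mult_mono)
  also have "\<dots> \<le> (\<Sum>l\<in>UNIV. B (s + t) $ i $ l * mat_prod B s t $ l $ j)"
    by (rule member_le_sum) (simp_all add: nonneg)
  finally show ?case by (simp add: matrix_matrix_mult_def)
qed

lemma traj_add: "traj A \<sigma> x0 (s + t) = mat_prod (\<lambda>t. A (\<sigma> t)) s t *v traj A \<sigma> x0 s"
  by (induction t) (simp_all add: matrix_vector_mul_assoc)

section \<open>Contraction of the spread\<close>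

lemma matrix_vector_mult_uminus: "M *v (- x) = - (M *v x)"
  for M :: "'a::ring_1^'n^'m"
  using matrix_vector_mult_diff_distrib[of M 0 x] by simp

definition vec_max :: "real^'n \<Rightarrow> real" where
  "vec_max x = Max (range (\<lambda>i. x $ i))"

definition vec_min :: "real^'n \<Rightarrow> real" where
  "vec_min x = Min (range (\<lambda>i. x $ i))"

lemma component_le_vec_max: "x $ i \<le> vec_max x"
  unfolding vec_max_def by simp

lemma vec_min_le_component: "vec_min x \<le> x $ i"
  unfolding vec_min_def by simp

lemma vec_max_attained: "\<exists>i. vec_max x = x $ i"
proof -
  have "Max (range (\<lambda>i. x $ i)) \<in> range (\<lambda>i. x $ i)" by (rule Max_in) auto
  then show ?thesis unfolding vec_max_def by blast
qed

lemma vec_min_eq_uminus_vec_max: "vec_min x = - vec_max (- x)"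
proof -
  have "range (\<lambda>i. (- x) $ i) = uminus ` range (\<lambda>i. x $ i)" by auto
  then show ?thesis unfolding vec_min_def vec_max_def by (simp add: image_image)
qed

lemma stochastic_mult_le_vec_max:
  assumes "stochastic M" "\<And>i. \<delta> \<le> M $ i $ j"
  shows "(M *v x) $ i \<le> vec_max x - \<delta> * (vec_max x - x $ j)"
proof -
  have gap: "vec_max x - (M *v x) $ i = (\<Sum>k\<in>UNIV. M $ i $ k * (vec_max x - x $ k))"
    using assms(1) unfolding stochastic_def matrix_vector_mult_def
    by (simp add: right_diff_distrib sum_subtractf sum_distrib_right[symmetric])
  have "\<delta> * (vec_max x - x $ j) \<le> M $ i $ j * (vec_max x - x $ j)"
    using assms(2) component_le_vec_max[of x j] by (simp add: mult_right_mono)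
  also have "\<dots> \<le> (\<Sum>k\<in>UNIV. M $ i $ k * (vec_max x - x $ k))"
    by (rule member_le_sum)
      (use assms(1) in \<open>auto simp: stochastic_def component_le_vec_max
        intro!: mult_nonneg_nonneg\<close>)
  finally show ?thesis unfolding gap[symmetric] by simp
qed

lemma stochastic_mult_ge_vec_min:
  assumes "stochastic M" "\<And>i. \<delta> \<le> M $ i $ j"
  shows "vec_min x + \<delta> * (x $ j - vec_min x) \<le> (M *v x) $ i"
  using stochastic_mult_le_vec_max[OF assms, of "- x" i]
  by (simp add: vec_min_eq_uminus_vec_max matrix_vector_mult_uminus algebra_simps)

lemma stochastic_mult_gap_le:
  assumes "stochastic M" "\<And>i. \<delta> \<le> M $ i $ j"
  shows "vec_max (M *v x) - vec_min (M *v x) \<le> (1 - \<delta>) * (vec_max x - vec_min x)"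
proof -
  obtain i where "vec_max (M *v x) = (M *v x) $ i" using vec_max_attained by blast
  moreover obtain i' where "vec_min (M *v x) = (M *v x) $ i'"
    using vec_max_attained[of "- (M *v x)"] by (auto simp: vec_min_eq_uminus_vec_max)
  ultimately show ?thesis
    using stochastic_mult_le_vec_max[OF assms, of x i] stochastic_mult_ge_vec_min[OF assms, of x i']
    by (simp add: algebra_simps)
qed

lemma stochastic_mult_vec_max_le:
  assumes "stochastic M"
  shows "vec_max (M *v x) \<le> vec_max x"
proof -
  obtain i where "vec_max (M *v x) = (M *v x) $ i" using vec_max_attained by blast
  moreover have "0 \<le> M $ i' $ j" for i' j using assms by (simp add: stochastic_def)
  ultimately show ?thesis using stochastic_mult_le_vec_max[OF assms, of 0] by simp
qed

lemma stochastic_mult_vec_min_ge: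
  assumes "stochastic M"
  shows "vec_min x \<le> vec_min (M *v x)"
  using stochastic_mult_vec_max_le[OF assms, of "- x"]
  by (simp add: vec_min_eq_uminus_vec_max matrix_vector_mult_uminus)

lemma gap_contraction_common_limit:
  fixes m M :: "nat \<Rightarrow> real"
  assumes "incseq m" "decseq M" "\<And>t. m t \<le> M t"
    and contraction: "\<And>t. M (t + N) - m (t + N) \<le> q * (M t - m t)"
    and "0 \<le> q" "q < 1"
  shows "\<exists>c. m \<longlonglongrightarrow> c \<and> M \<longlonglongrightarrow> c"
proof -
  define D where "D t = M t - m t" for t
  have "decseq D"
    using assms(1,2) unfolding D_def incseq_def decseq_def by (simp add: diff_mono)
  moreover have D_nonneg: "0 \<le> D t" for t
    using assms(3) by (simp add: D_def)
  ultimately obtain L where L: "D \<longlonglongrightarrow> L" "\<And>t. L \<le> D t"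
    using decseq_convergent by blast
  have D_power: "D (k * N) \<le> q ^ k * D 0" for k
  proof (induction k)
    case (Suc k)
    have "D (Suc k * N) \<le> q * D (k * N)"
      using contraction[of "k * N"] by (simp add: D_def add.commute)
    also have "\<dots> \<le> q * (q ^ k * D 0)"
      using Suc \<open>0 \<le> q\<close> by (rule mult_left_mono)
    finally show ?case by simp
  qed simp
  have "(\<lambda>k. q ^ k * D 0) \<longlonglongrightarrow> 0 * D 0"
    using assms(5,6) by (intro tendsto_mult tendsto_const LIMSEQ_realpow_zero)
  moreover have "L \<le> q ^ k * D 0" for k
    using L(2)[of "k * N"] D_power[of k] by linarith
  ultimately have "L \<le> 0 * D 0"
    by (intro LIMSEQ_le_const[of "\<lambda>k. q ^ k * D 0"]) auto
  moreover have "0 \<le> L"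
    using LIMSEQ_le_const[OF L(1)] D_nonneg by blast
  ultimately have "L = 0" by simp
  then have D_lim: "D \<longlonglongrightarrow> 0"
    using L(1) by simp
  have "m t \<le> M 0" for t
    using assms(3)[of t] \<open>decseq M\<close> by (simp add: decseq_def order_trans)
  then obtain c where c: "m \<longlonglongrightarrow> c"
    using incseq_convergent[OF assms(1)] by blast
  have "(\<lambda>t. m t + D t) \<longlonglongrightarrow> c + 0"
    using c D_lim by (rule tendsto_add)
  then have "M \<longlonglongrightarrow> c"
    by (simp add: D_def)
  with c show ?thesis by blast
qed

lemma tendsto_scaleR_one_if_squeezed:
  fixes x :: "nat \<Rightarrow> real^'n"
  assumes "\<And>t i. m t \<le> x t $ i" "\<And>t i. x t $ i \<le> M t" "m \<longlonglongrightarrow> c" "M \<longlonglongrightarrow> c"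
  shows "x \<longlonglongrightarrow> c *\<^sub>R 1"
proof (rule vec_tendstoI)
  fix i
  have "(\<lambda>t. x t $ i) \<longlonglongrightarrow> c"
    by (rule tendsto_sandwich[of m _ _ M]) (use assms in auto)
  then show "(\<lambda>t. x t $ i) \<longlonglongrightarrow> (c *\<^sub>R 1) $ i" by simp
qed

section \<open>Consensus\<close>

lemma positive_entries_uniform_lower_bound:
  fixes \<A> :: "(real^'n^'m) set"
  assumes "finite \<A>"
  shows "\<exists>a>0. a \<le> 1 \<and> (\<forall>M\<in>\<A>. \<forall>i j. 0 < M $ i $ j \<longrightarrow> a \<le> M $ i $ j)"
proof -
  define S where "S = (\<lambda>(M, i, j). M $ i $ j) ` (\<A> \<times> UNIV \<times> UNIV) \<inter> {0<..}"
  have S: "finite S" using assms by (simp add: S_def)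
  define a where "a = Min (insert 1 S)"
  have "0 < a" using S by (simp add: a_def S_def)
  moreover have "a \<le> 1" using S by (simp add: a_def)
  moreover have "a \<le> M $ i $ j" if "M \<in> \<A>" "0 < M $ i $ j" for M i j
  proof -
    have "M $ i $ j \<in> S"
      using that unfolding S_def by (auto intro!: image_eqI[where x = "(M, i, j)"])
    then show ?thesis using S by (simp add: a_def)
  qed
  ultimately show ?thesis by blast
qed

lemma consensus_under_if_full_column_windows:
  fixes A :: "nat \<Rightarrow> real^'n^'n"
  assumes stoch: "\<And>t. stochastic (A (\<sigma> t))"
    and finite: "finite (range (\<lambda>t. A (\<sigma> t)))"
    and windows: "\<And>s. has_full_column (rel_prod (\<lambda>t. pos_rel (A (\<sigma> t))) s N)"
  shows "consensus_under A \<sigma>"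
  unfolding consensus_under_def
proof
  fix x0
  define B where "B t = A (\<sigma> t)" for t
  define x where "x t = traj A \<sigma> x0 t" for t
  obtain a where a: "0 < a" "a \<le> 1" "\<And>t i j. 0 < B t $ i $ j \<Longrightarrow> a \<le> B t $ i $ j"
    using positive_entries_uniform_lower_bound[OF finite] unfolding B_def by fastforce
  define \<delta> where "\<delta> = a ^ N"
  have \<delta>: "0 < \<delta>" "\<delta> \<le> 1" using a by (simp_all add: \<delta>_def power_le_one)
  have stoch_B: "stochastic (B t)" for t using stoch by (simp add: B_def)
  have step: "x (Suc t) = B t *v x t" for t by (simp add: x_def B_def)
  have window: "vec_max (x (t + N)) - vec_min (x (t + N))
      \<le> (1 - \<delta>) * (vec_max (x t) - vec_min (x t))" for t
  proof -
    obtain j where "\<forall>i. pos_rel (mat_prod B t N) i j"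
      using windows[of t] unfolding has_full_column_def pos_rel_mat_prod[OF stoch_B] B_def by blast
    then have "\<delta> \<le> mat_prod B t N $ i $ j" for i
      using mat_prod_entry_ge_power[OF stoch_B a(3)] a(1) unfolding pos_rel_def \<delta>_def by simp
    then have "vec_max (mat_prod B t N *v x t) - vec_min (mat_prod B t N *v x t)
        \<le> (1 - \<delta>) * (vec_max (x t) - vec_min (x t))"
      by (rule stochastic_mult_gap_le[OF stochastic_mat_prod[of B t N, OF stoch_B]])
    moreover have "x (t + N) = mat_prod B t N *v x t"
      unfolding x_def B_def by (rule traj_add)
    ultimately show ?thesis by simp
  qed
  have "\<exists>c. (\<lambda>t. vec_min (x t)) \<longlonglongrightarrow> c \<and> (\<lambda>t. vec_max (x t)) \<longlonglongrightarrow> c"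
  proof (rule gap_contraction_common_limit[where N = N and q = "1 - \<delta>"])
    show "incseq (\<lambda>t. vec_min (x t))" "decseq (\<lambda>t. vec_max (x t))"
      by (simp_all add: incseq_SucI decseq_SucI step stochastic_mult_vec_min_ge
          stochastic_mult_vec_max_le stoch_B)
    show "vec_min (x t) \<le> vec_max (x t)" for t
      using vec_min_le_component component_le_vec_max order_trans by blast
  qed (use window \<delta> in auto)
  then obtain c where "(\<lambda>t. vec_min (x t)) \<longlonglongrightarrow> c" "(\<lambda>t. vec_max (x t)) \<longlonglongrightarrow> c"
    by blast
  then have "x \<longlonglongrightarrow> c *\<^sub>R 1"
    by (rule tendsto_scaleR_one_if_squeezed[rotated 2])
      (simp_all add: vec_min_le_component component_le_vec_max)
  then show "\<exists>c. traj A \<sigma> x0 \<longlonglongrightarrow> c *\<^sub>R 1" unfolding x_def by blast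
qed

text \<open>Consensus from the unit vectors makes every column of the products converge to a constant
  vector; the limits sum to 1, so some column converges to a positive vector.\<close>
lemma full_column_if_consensus_under:
  fixes A :: "nat \<Rightarrow> real^'n^'n"
  assumes stoch: "\<And>t. stochastic (A (\<sigma> t))" and consensus: "consensus_under A \<sigma>"
  shows "\<exists>t. has_full_column (rel_prod (\<lambda>t. pos_rel (A (\<sigma> t))) 0 t)"
proof -
  define P where "P t = mat_prod (\<lambda>t. A (\<sigma> t)) 0 t" for t
  have stoch_P: "stochastic (P t)" for t
    unfolding P_def using stoch by (rule stochastic_mat_prod)
  have "\<forall>j. \<exists>c. traj A \<sigma> (axis j 1) \<longlonglongrightarrow> c *\<^sub>R 1"
    using consensus unfolding consensus_under_def by blast
  then obtain c where "\<And>j. traj A \<sigma> (axis j 1) \<longlonglongrightarrow> c j *\<^sub>R 1" by metis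
  moreover have "traj A \<sigma> (axis j 1) t $ i = P t $ i $ j" for i j t
    using traj_add[of A \<sigma> "axis j 1" 0 t]
    by (simp add: P_def matrix_vector_mult_basis column_def)
  ultimately have c: "(\<lambda>t. P t $ i $ j) \<longlonglongrightarrow> c j" for i j
    using tendsto_vec_nth[of "traj A \<sigma> (axis j 1)" "c j *\<^sub>R 1" sequentially i] by simp
  fix i0 :: 'n
  have "(\<lambda>t. \<Sum>j\<in>UNIV. P t $ i0 $ j) \<longlonglongrightarrow> (\<Sum>j\<in>UNIV. c j)"
    by (intro tendsto_sum c)
  moreover have "(\<lambda>t. \<Sum>j\<in>UNIV. P t $ i0 $ j) = (\<lambda>t. 1)"
    using stoch_P unfolding stochastic_def by simp
  ultimately have "(\<Sum>j\<in>UNIV. c j) = 1"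
    using LIMSEQ_unique tendsto_const by metis
  then obtain j where "0 < c j"
    by (metis not_le sum_nonpos zero_neq_one order.antisym zero_le_one)
  then have "\<forall>\<^sub>F t in sequentially. \<forall>i. 0 < P t $ i $ j"
    using order_tendstoD(1)[OF c] by (intro eventually_all_finite) blast
  then obtain t where "\<forall>i. pos_rel (P t) i j"
    by (auto simp: eventually_sequentially pos_rel_def)
  then show ?thesis
    unfolding P_def pos_rel_mat_prod[OF stoch] has_full_column_def by blast
qed

lemma full_column_power_if_consensus_under_constant:
  fixes A :: "nat \<Rightarrow> real^'n^'n"
  assumes "stochastic (A k)" "consensus_under A (\<lambda>_. k)"
  shows "\<exists>t. has_full_column (pos_rel (A k) ^^ t)"
  using full_column_if_consensus_under[of A "\<lambda>_. k"] assms by (simp add: rel_prod_const)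

lemma full_column_power_if_consensus_under_alternating:
  fixes A :: "nat \<Rightarrow> real^'n^'n"
  assumes "stochastic (A k)" "stochastic (A l)"
    and "consensus_under A (\<lambda>t. if even t then k else l)"
  shows "\<exists>t. has_full_column ((pos_rel (A l) OO pos_rel (A k)) ^^ t)"
proof -
  define S where "S t = pos_rel (A (if even t then k else l))" for t :: nat
  have stoch: "stochastic (A (if even t then k else l))" for t
    using assms by simp
  have total: "left_total (S t)" for t
    unfolding S_def using stoch by (rule left_total_pos_rel)
  obtain t where "has_full_column (rel_prod S 0 t)"
    using full_column_if_consensus_under[OF stoch assms(3)] unfolding S_def by blast
  then have "has_full_column (rel_prod S 0 (2 * t))"
    by (rule has_full_column_rel_prod_mono[OF total]) simp
  moreover have "rel_prod S 0 (2 * t) = (pos_rel (A l) OO pos_rel (A k)) ^^ t"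
    using rel_prod_alternating[of "\<lambda>b. pos_rel (A (if b then k else l))" t]
    unfolding S_def by simp
  ultimately show ?thesis by auto
qed

theorem proposition2:
  fixes A1 A2 :: "real^'n^'n"
  assumes "stochastic A1" "undirected A1" "stochastic A2" "undirected A2"
  defines "A \<equiv> (\<lambda>k::nat. if k = 1 then A1 else A2)"
  shows "(\<forall>\<sigma>::nat \<Rightarrow> nat. range \<sigma> \<subseteq> {1, 2} \<longrightarrow> consensus_under A \<sigma>) \<longleftrightarrow>
         (consensus_under A (\<lambda>_. 1) \<and> consensus_under A (\<lambda>_. 2) \<and>
          consensus_under A (\<lambda>t. if even t then 1 else 2))"
proof
  assume "\<forall>\<sigma>::nat \<Rightarrow> nat. range \<sigma> \<subseteq> {1, 2} \<longrightarrow> consensus_under A \<sigma>"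
  then show "consensus_under A (\<lambda>_. 1) \<and> consensus_under A (\<lambda>_. 2) \<and>
      consensus_under A (\<lambda>t. if even t then 1 else 2)"
    by (simp add: image_subset_iff)
next
  assume C: "consensus_under A (\<lambda>_. 1) \<and> consensus_under A (\<lambda>_. 2) \<and>
      consensus_under A (\<lambda>t. if even t then 1 else 2)"
  define R where "R b = pos_rel (A (if b then 1 else 2))" for b
  have stoch: "stochastic (A k)" for k
    using assms by (simp add: A_def)
  have "symmetric_total_pair R"
    using assms by unfold_locales (simp_all add: A_def R_def symp_pos_rel left_total_pos_rel)
  moreover have "\<exists>t. has_full_column (R b ^^ t)" for b
    using full_column_power_if_consensus_under_constant[of A, OF stoch] C
    by (cases b) (simp_all add: R_def)
  moreover have "\<exists>t. has_full_column ((R False OO R True) ^^ t)"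
    using full_column_power_if_consensus_under_alternating[of A 1 2, OF stoch stoch] C
    unfolding R_def by simp
  ultimately have windows:
    "has_full_column (rel_prod (\<lambda>t. R (\<sigma> t = 1)) s CARD('n \<Rightarrow> 'n \<Rightarrow> bool))"
    for \<sigma> s by (rule has_full_column_rel_prod_window)
  have pos_rel_A: "pos_rel (A k) = R (k = 1)" for k
    by (simp add: A_def R_def)
  show "\<forall>\<sigma>::nat \<Rightarrow> nat. range \<sigma> \<subseteq> {1, 2} \<longrightarrow> consensus_under A \<sigma>"
  proof (intro allI impI)
    fix \<sigma> :: "nat \<Rightarrow> nat"
    have "finite (range (\<lambda>t. A (\<sigma> t)))"
      by (rule finite_subset[of _ "{A1, A2}"]) (auto simp: A_def)
    then show "consensus_under A \<sigma>"
      by (rule consensus_under_if_full_column_windows[of A, OF stoch])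
        (unfold pos_rel_A, rule windows)
  qed
qed

end
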